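(* Assume $g$ satisfies (Hg), and let $a\in(0,1)$ and $k>0$. Define $$d^-(a):=\max_{y\in(a,1)}\frac{g(y;a)}{y},\qquad d^+(a,k):=\max_{y\in(1-a,1)}\frac{-g(1-y;a)}{ky}.$$ Then: (i) for every $d\in(0,d^+(a,k))$ we have $c(a,d,k)\ge 0$; (ii) for every $d\in(0,d^-(a))$ we have $c(a,d,k)\le 0$. In particular, if $0<d<\min\{d^-(a),d^+(a,k)\}$, then $c(a,d,k)=0$.
   Context: A function $g:\mathbb R\times[0,1]\to\mathbb R$, $(u,a)\mapsto g(u;a)$, satisfies (Hg) if it is $C^1$ and for every $a\in(0,1)$: $g(0;a)=g(a;a)=g(1;a)=0$, $g'(0;a)<0$, $g'(1;a)<0$, $g'(a;a)>0$ (where $g'=\partial_u g$), $g(v;a)>0$ for $v\in(-\infty,0)\cup(a,1)$ and $g(v;a)<0$ for $v\in(0,a)\cup(1,\infty)$. For $k>0$, $a\in(0,1)$, $d>0$ consider the traveling wave problem: find $c\in\mathbb R$ and $\Phi:\mathbb R\to\mathbb R$ with $$-c\Phi'(\xi)=d\big(k\Phi(\xi+1)-(k+1)\Phi(\xi)+\Phi(\xi-1)\big)+g(\Phi(\xi);a)\quad(\xi\in\mathbb R),\qquad \lim_{\xi\to-\infty}\Phi(\xi)=0,\ \lim_{\xi\to+\infty}\Phi(\xi)=1.$$ It is known (Mallet-Paret) that under (Hg) this problem has a solution with $\Phi$ non-decreasing and that the speed $c$ is uniquely determined; it is denoted $c(a,d,k)$. *)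

theory Defs
  imports "HOL-Analysis.Analysis"
begin

definition C1_on_strip :: "(real \<Rightarrow> real \<Rightarrow> real) \<Rightarrow> bool" where
  "C1_on_strip g \<longleftrightarrow> (\<exists>gu ga :: real \<times> real \<Rightarrow> real.
     continuous_on (UNIV \<times> {0..1}) gu \<and> continuous_on (UNIV \<times> {0..1}) ga \<and>
     (\<forall>p \<in> UNIV \<times> {0..1}.
        ((\<lambda>q. g (fst q) (snd q)) has_derivative
           (\<lambda>h. gu p * fst h + ga p * snd h)) (at p within UNIV \<times> {0..1})))"

definition Hg :: "(real \<Rightarrow> real \<Rightarrow> real) \<Rightarrow> bool" where
  "Hg g \<longleftrightarrow> C1_on_strip g \<and>
     (\<forall>a. 0 < a \<and> a < 1 \<longrightarrow>
        g 0 a = 0 \<and> g a a = 0 \<and> g 1 a = 0 \<and>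
        deriv (\<lambda>u. g u a) 0 < 0 \<and> deriv (\<lambda>u. g u a) 1 < 0 \<and> deriv (\<lambda>u. g u a) a > 0 \<and>
        (\<forall>v. (v < 0 \<or> (a < v \<and> v < 1)) \<longrightarrow> g v a > 0) \<and>
        (\<forall>v. ((0 < v \<and> v < a) \<or> 1 < v) \<longrightarrow> g v a < 0))"

definition tw_rhs :: "(real \<Rightarrow> real \<Rightarrow> real) \<Rightarrow> real \<Rightarrow> real \<Rightarrow> real \<Rightarrow> (real \<Rightarrow> real) \<Rightarrow> real \<Rightarrow> real" where
  "tw_rhs g a d k \<Phi> \<xi> = d * (k * \<Phi> (\<xi> + 1) - (k + 1) * \<Phi> \<xi> + \<Phi> (\<xi> - 1)) + g (\<Phi> \<xi>) a"

text \<open>(c, Phi) solves the traveling wave problem. For c = 0 the equation contains no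
  derivative (Phi need not be differentiable); for c \<noteq> 0 Phi is differentiable and
  -c Phi' = rhs pointwise.\<close>
definition tw_solution :: "(real \<Rightarrow> real \<Rightarrow> real) \<Rightarrow> real \<Rightarrow> real \<Rightarrow> real \<Rightarrow> real \<Rightarrow> (real \<Rightarrow> real) \<Rightarrow> bool" where
  "tw_solution g a d k c \<Phi> \<longleftrightarrow>
     (\<forall>\<xi>. if c = 0 then tw_rhs g a d k \<Phi> \<xi> = 0
           else (\<exists>D. (\<Phi> has_real_derivative D) (at \<xi>) \<and> - c * D = tw_rhs g a d k \<Phi> \<xi>)) \<and>
     (\<Phi> \<longlongrightarrow> 0) at_bot \<and> (\<Phi> \<longlongrightarrow> 1) at_top"

definition d_minus :: "(real \<Rightarrow> real \<Rightarrow> real) \<Rightarrow> real \<Rightarrow> real" where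
  "d_minus g a = (SUP y \<in> {a<..<1}. g y a / y)"

definition d_plus :: "(real \<Rightarrow> real \<Rightarrow> real) \<Rightarrow> real \<Rightarrow> real \<Rightarrow> real" where
  "d_plus g a k = (SUP y \<in> {1-a<..<1}. - g (1 - y) a / (k * y))"

end

theory Submission
  imports Defs
begin

text \<open>If c \<noteq> 0 the profile is differentiable with \<Phi>' \<ge> 0, so the lattice right-hand side
  has the sign of -c everywhere, and \<Phi>, being continuous, takes every value in (0,1).
  For c < 0 evaluate at \<Phi>(\<xi>) = 1 - y, where y \<in> (1-a,1) satisfies d k y < -g(1-y;a): as
  \<Phi> \<le> 1 and \<Phi>(\<xi>-1) \<le> \<Phi>(\<xi>), the discrete operator there is at most k(1 - \<Phi>(\<xi>)) = k y,
  so the right-hand side is negative. For c > 0 evaluate at \<Phi>(\<xi>) = y \<in> (a,1) with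
  d y < g(y;a): as \<Phi> \<ge> 0 and \<Phi>(\<xi>) \<le> \<Phi>(\<xi>+1), the operator is at least -y and the
  right-hand side is positive.\<close>

lemma C1_on_strip_continuous_on:
  assumes "C1_on_strip g" "a \<in> {0..1}"
  shows "continuous_on UNIV (\<lambda>u. g u a)"
proof -
  let ?G = "\<lambda>q. g (fst q) (snd q)"
  from assms(1) obtain gu ga :: "real \<times> real \<Rightarrow> real" where
    "\<forall>p \<in> UNIV \<times> {0..1}. (?G has_derivative (\<lambda>h. gu p * fst h + ga p * snd h)) (at p within UNIV \<times> {0..1})"
    unfolding C1_on_strip_def by blast
  then have "continuous_on (UNIV \<times> {0..1}) ?G"
    unfolding continuous_on_eq_continuous_within using has_derivative_continuous by blast
  then have "continuous_on UNIV (\<lambda>u. ?G (u, a))"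
    by (rule continuous_on_compose2) (use assms(2) in \<open>auto intro: continuous_intros\<close>)
  then show ?thesis by simp
qed

lemma C1_on_strip_bounded:
  assumes "C1_on_strip g" "a \<in> {0..1}"
  obtains B where "\<And>u. u \<in> {0..1} \<Longrightarrow> \<bar>g u a\<bar> \<le> B"
proof -
  have "compact ((\<lambda>u. g u a) ` {0..1})"
    using C1_on_strip_continuous_on[OF assms]
    by (intro compact_continuous_image) (auto intro: continuous_on_subset)
  then have "bounded ((\<lambda>u. g u a) ` {0..1})" by (rule compact_imp_bounded)
  then obtain B where "\<forall>u\<in>{0..1}. \<bar>g u a\<bar> \<le> B" unfolding bounded_iff by auto
  with that show ?thesis by blast
qed

lemma bdd_above_quotient:
  fixes f h :: "'a \<Rightarrow> real"
  assumes "\<And>x. x \<in> A \<Longrightarrow> f x \<le> B" and "\<And>x. x \<in> A \<Longrightarrow> m \<le> h x" and "0 < m"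
  shows "bdd_above ((\<lambda>x. f x / h x) ` A)"
proof (rule bdd_aboveI2)
  fix x assume "x \<in> A"
  with assms show "f x / h x \<le> \<bar>B\<bar> / m"
    by (intro frac_le) (auto intro: order_trans[OF _ abs_ge_self])
qed

lemma less_d_minus_witness:
  assumes "C1_on_strip g" "0 < a" "a < 1" "d < d_minus g a"
  obtains y where "y \<in> {a<..<1}" "d * y < g y a"
proof -
  obtain B where B: "\<And>u. u \<in> {0..1} \<Longrightarrow> \<bar>g u a\<bar> \<le> B"
    using C1_on_strip_bounded[OF assms(1), of a] assms(2,3) by auto
  have "bdd_above ((\<lambda>y. g y a / y) ` {a<..<1})"
    by (rule bdd_above_quotient[where B = B and m = a]) (use B assms(2,3) in \<open>auto simp: abs_le_iff\<close>)
  then obtain y where y: "y \<in> {a<..<1}" "d < g y a / y"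
    using assms(3,4) unfolding d_minus_def by (subst (asm) less_cSUP_iff) auto
  moreover from y(1) assms(2) have "0 < y" by simp
  ultimately show ?thesis using that by (simp add: field_simps)
qed

lemma less_d_plus_witness:
  assumes "C1_on_strip g" "0 < a" "a < 1" "0 < k" "d < d_plus g a k"
  obtains y where "y \<in> {1-a<..<1}" "d * k * y < - g (1 - y) a"
proof -
  obtain B where B: "\<And>u. u \<in> {0..1} \<Longrightarrow> \<bar>g u a\<bar> \<le> B"
    using C1_on_strip_bounded[OF assms(1), of a] assms(2,3) by auto
  have "bdd_above ((\<lambda>y. - g (1 - y) a / (k * y)) ` {1-a<..<1})"
    by (rule bdd_above_quotient[where B = B and m = "k * (1 - a)"])
      (use B assms(2-4) in \<open>auto simp: abs_le_iff\<close>)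
  then obtain y where y: "y \<in> {1-a<..<1}" "d < - g (1 - y) a / (k * y)"
    using assms(2,5) unfolding d_plus_def by (subst (asm) less_cSUP_iff) auto
  moreover from y(1) assms(3,4) have "0 < k * y" by simp
  ultimately show ?thesis using that by (simp add: field_simps)
qed

lemma mono_tendsto_bounds:
  fixes \<Phi> :: "real \<Rightarrow> real"
  assumes "mono \<Phi>" "(\<Phi> \<longlongrightarrow> l) at_bot" "(\<Phi> \<longlongrightarrow> u) at_top"
  shows "l \<le> \<Phi> x" "\<Phi> x \<le> u"
proof -
  have "\<forall>\<^sub>F t in at_bot. \<Phi> t \<le> \<Phi> x"
    unfolding eventually_at_bot_linorder using assms(1) by (auto dest: monoD)
  then show "l \<le> \<Phi> x" using tendsto_upperbound[OF assms(2)] by simp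
  have "\<forall>\<^sub>F t in at_top. \<Phi> x \<le> \<Phi> t"
    unfolding eventually_at_top_linorder using assms(1) by (auto dest: monoD)
  then show "\<Phi> x \<le> u" using tendsto_lowerbound[OF assms(3)] by simp
qed

lemma continuous_tendsto_at_bot_at_top_range:
  fixes \<Phi> :: "real \<Rightarrow> real"
  assumes "continuous_on UNIV \<Phi>" "(\<Phi> \<longlongrightarrow> l) at_bot" "(\<Phi> \<longlongrightarrow> u) at_top" "l < y" "y < u"
  shows "y \<in> range \<Phi>"
proof -
  obtain x1 where "\<Phi> x1 < y"
    using order_tendstoD(2)[OF assms(2,4)] by (auto simp: eventually_at_bot_linorder)
  moreover obtain x2 where "y < \<Phi> x2"
    using order_tendstoD(1)[OF assms(3,5)] by (auto simp: eventually_at_top_linorder)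
  moreover have "connected (range \<Phi>)"
    using assms(1) by (intro connected_continuous_image) auto
  ultimately show ?thesis by (meson connectedD_interval rangeI less_imp_le)
qed

lemma lattice_operator_le:
  fixes \<Phi> :: "real \<Rightarrow> real"
  assumes "mono \<Phi>" "\<And>x. \<Phi> x \<le> 1" "0 \<le> k"
  shows "k * \<Phi> (\<xi> + 1) - (k + 1) * \<Phi> \<xi> + \<Phi> (\<xi> - 1) \<le> k * (1 - \<Phi> \<xi>)"
proof -
  have "\<Phi> (\<xi> - 1) \<le> \<Phi> \<xi>" using assms(1) by (simp add: monoD)
  moreover have "k * \<Phi> (\<xi> + 1) \<le> k * 1" using assms(2,3) by (intro mult_left_mono)
  ultimately show ?thesis by (simp add: algebra_simps)
qed

lemma lattice_operator_ge:
  fixes \<Phi> :: "real \<Rightarrow> real"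
  assumes "mono \<Phi>" "\<And>x. 0 \<le> \<Phi> x" "0 \<le> k"
  shows "- \<Phi> \<xi> \<le> k * \<Phi> (\<xi> + 1) - (k + 1) * \<Phi> \<xi> + \<Phi> (\<xi> - 1)"
proof -
  have "k * \<Phi> \<xi> \<le> k * \<Phi> (\<xi> + 1)" using assms(1,3) by (intro mult_left_mono) (simp_all add: monoD)
  then show ?thesis using assms(2)[of "\<xi> - 1"] by (simp add: algebra_simps)
qed

lemma tw_solution_speed_times_rhs_nonpos:
  assumes "mono \<Phi>" "tw_solution g a d k c \<Phi>"
  shows "c * tw_rhs g a d k \<Phi> \<xi> \<le> 0"
proof (cases "c = 0")
  case False
  then obtain D where D: "(\<Phi> has_real_derivative D) (at \<xi>)" "- c * D = tw_rhs g a d k \<Phi> \<xi>"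
    using assms(2) unfolding tw_solution_def by metis
  have "0 \<le> D" using mono_on_imp_deriv_nonneg[OF assms(1) D(1)] by simp
  moreover have "c * tw_rhs g a d k \<Phi> \<xi> = - (c\<^sup>2 * D)"
    by (simp flip: D(2) add: power2_eq_square)
  ultimately show ?thesis by simp
qed simp

lemma tw_solution_range:
  assumes "mono \<Phi>" "tw_solution g a d k c \<Phi>" "c \<noteq> 0" "0 < y" "y < 1"
  shows "y \<in> range \<Phi>"
proof -
  have "continuous_on UNIV \<Phi>"
    using assms(2,3) unfolding tw_solution_def
    by (metis DERIV_isCont continuous_at_imp_continuous_on)
  with assms show ?thesis
    unfolding tw_solution_def by (blast intro: continuous_tendsto_at_bot_at_top_range)
qed

lemma tw_solution_bounds:
  assumes "mono \<Phi>" "tw_solution g a d k c \<Phi>"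
  shows "0 \<le> \<Phi> x" "\<Phi> x \<le> 1"
  using assms mono_tendsto_bounds unfolding tw_solution_def by blast+

lemma tw_speed_nonneg_below_d_plus:
  assumes "C1_on_strip g" "0 < a" "a < 1" "0 < k" "0 < d" "d < d_plus g a k"
    and "mono \<Phi>" "tw_solution g a d k c \<Phi>"
  shows "0 \<le> c"
proof (rule ccontr)
  assume "\<not> 0 \<le> c"
  then have "c < 0" by simp
  obtain y where y: "y \<in> {1-a<..<1}" "d * k * y < - g (1 - y) a"
    using less_d_plus_witness assms(1-4,6) by blast
  have "1 - y \<in> range \<Phi>"
    using \<open>c < 0\<close> y(1) assms(2,3) by (intro tw_solution_range[OF assms(7,8)]) auto
  then obtain \<xi> where \<xi>: "\<Phi> \<xi> = 1 - y" by auto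
  have "k * \<Phi> (\<xi> + 1) - (k + 1) * \<Phi> \<xi> + \<Phi> (\<xi> - 1) \<le> k * y"
    using lattice_operator_le[OF assms(7) tw_solution_bounds(2)[OF assms(7,8)], of k \<xi>] assms(4) \<xi> by simp
  then have "d * (k * \<Phi> (\<xi> + 1) - (k + 1) * \<Phi> \<xi> + \<Phi> (\<xi> - 1)) \<le> d * (k * y)"
    using assms(5) by (intro mult_left_mono) auto
  then have "tw_rhs g a d k \<Phi> \<xi> < 0"
    using y(2) unfolding tw_rhs_def \<xi> by (simp add: mult.assoc)
  then have "0 < c * tw_rhs g a d k \<Phi> \<xi>" using \<open>c < 0\<close> by (intro mult_neg_neg)
  with tw_solution_speed_times_rhs_nonpos[OF assms(7,8)] show False by (simp add: not_le[symmetric])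
qed

lemma tw_speed_nonpos_below_d_minus:
  assumes "C1_on_strip g" "0 < a" "a < 1" "0 \<le> k" "0 < d" "d < d_minus g a"
    and "mono \<Phi>" "tw_solution g a d k c \<Phi>"
  shows "c \<le> 0"
proof (rule ccontr)
  assume "\<not> c \<le> 0"
  then have "0 < c" by simp
  obtain y where y: "y \<in> {a<..<1}" "d * y < g y a"
    using less_d_minus_witness assms(1-3,6) by blast
  have "y \<in> range \<Phi>"
    using \<open>0 < c\<close> y(1) assms(2) by (intro tw_solution_range[OF assms(7,8)]) auto
  then obtain \<xi> where \<xi>: "\<Phi> \<xi> = y" by auto
  have "- y \<le> k * \<Phi> (\<xi> + 1) - (k + 1) * \<Phi> \<xi> + \<Phi> (\<xi> - 1)"
    using lattice_operator_ge[OF assms(7) tw_solution_bounds(1)[OF assms(7,8)], of k \<xi>] assms(4) \<xi> by simp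
  then have "d * (- y) \<le> d * (k * \<Phi> (\<xi> + 1) - (k + 1) * \<Phi> \<xi> + \<Phi> (\<xi> - 1))"
    using assms(5) by (intro mult_left_mono) auto
  then have "0 < tw_rhs g a d k \<Phi> \<xi>"
    using y(2) unfolding tw_rhs_def \<xi> by simp
  then have "0 < c * tw_rhs g a d k \<Phi> \<xi>" using \<open>0 < c\<close> by (intro mult_pos_pos)
  with tw_solution_speed_times_rhs_nonpos[OF assms(7,8)] show False by (simp add: not_le[symmetric])
qed

theorem proposition2p3:
  fixes g :: "real \<Rightarrow> real \<Rightarrow> real" and a k :: real
  assumes "Hg g" and "0 < a" and "a < 1" and "0 < k"
  shows "(\<forall>d c \<Phi>. 0 < d \<and> d < d_plus g a k \<and> mono \<Phi> \<and> tw_solution g a d k c \<Phi> \<longrightarrow> c \<ge> 0)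
       \<and> (\<forall>d c \<Phi>. 0 < d \<and> d < d_minus g a \<and> mono \<Phi> \<and> tw_solution g a d k c \<Phi> \<longrightarrow> c \<le> 0)
       \<and> (\<forall>d c \<Phi>. 0 < d \<and> d < min (d_minus g a) (d_plus g a k) \<and> mono \<Phi> \<and> tw_solution g a d k c \<Phi> \<longrightarrow> c = 0)"
proof -
  have C1: "C1_on_strip g" using assms(1) unfolding Hg_def by blast
  note nonneg = tw_speed_nonneg_below_d_plus[OF C1 assms(2-4)]
  note nonpos = tw_speed_nonpos_below_d_minus[OF C1 assms(2,3) less_imp_le[OF assms(4)]]
  show ?thesis by (auto intro: nonneg nonpos antisym)
qed

end
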